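(* Let $n\ge 3$ and let $\mathcal X$ be an $(n,n-2)$-set of $\mathrm{PG}(n,q)$. Then $$|\mathcal X|\le \left(\frac{n!\,(q^{n+1}-1)(q^n-1)}{(q-1)(q^2-1)}\right)^{\frac{1}{n-1}}+n-2 .$$
   Context: $q$ is a prime power and $\mathrm{PG}(n,q)$ is the $n$-dimensional projective space over $\mathbb F_q$. For integers $r,s$, an $(r,s)$-set of $\mathrm{PG}(n,q)$ is a set $\mathcal X$ of points such that: (i) every $s$-dimensional projective subspace contains at most $r$ points of $\mathcal X$; (ii) $\mathcal X$ spans $\mathrm{PG}(n,q)$; (iii) some $(s+1)$-dimensional projective subspace contains $r+2$ points of $\mathcal X$. *)

theory Defs
  imports Complex_Main "HOL-Library.Function_Algebras"
begin

text \<open>PG(n,q) is modelled over a finite field 'a (so q = CARD('a) is a prime power).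
  The underlying vector space F_q^(n+1) consists of functions nat => 'a vanishing
  at indices greater than n (coordinates 0..n).  A projective s-subspace is a linear
  subspace of dimension s+1; a point is a projective 0-subspace (a 1-dimensional
  linear subspace), and a point P lies in a projective subspace W iff P is contained in W.\<close>

definition scl :: "'a::field \<Rightarrow> (nat \<Rightarrow> 'a) \<Rightarrow> (nat \<Rightarrow> 'a)" where
  "scl c v = (\<lambda>i. c * v i)"

definition vecs :: "nat \<Rightarrow> (nat \<Rightarrow> 'a::field) set" where
  "vecs n = {v. \<forall>i>n. v i = 0}"

definition proj_subspace :: "nat \<Rightarrow> nat \<Rightarrow> (nat \<Rightarrow> 'a::field) set \<Rightarrow> bool" where
  "proj_subspace n s W \<longleftrightarrow>
     W \<subseteq> vecs n \<and> module.subspace scl W \<and> vector_space.dim scl W = s + 1"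

definition PG_points :: "nat \<Rightarrow> (nat \<Rightarrow> 'a::field) set set" where
  "PG_points n = {P. proj_subspace n 0 P}"

definition pts_in :: "(nat \<Rightarrow> 'a::field) set set \<Rightarrow> (nat \<Rightarrow> 'a) set \<Rightarrow> nat" where
  "pts_in X W = card {P \<in> X. P \<subseteq> W}"

definition rs_set :: "nat \<Rightarrow> nat \<Rightarrow> nat \<Rightarrow> (nat \<Rightarrow> 'a::{finite,field}) set set \<Rightarrow> bool" where
  "rs_set n r s X \<longleftrightarrow>
     X \<subseteq> PG_points n \<and>
     (\<forall>W. proj_subspace n s W \<longrightarrow> pts_in X W \<le> r) \<and>
     module.span scl (\<Union>X) = vecs n \<and>
     (\<exists>W. proj_subspace n (s + 1) W \<and> pts_in X W \<ge> r + 2)"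

end

theory Submission imports Defs "HOL-Library.Cardinality" "HOL-Library.FuncSet" begin

(* Any n - 1 points of PG(n,q) lie in a common (n-2)-subspace, and such a subspace contains at most
   n points of X, hence at most n of the (n-1)-subsets of X.  Counting ordered bases shows that
   there are exactly N = (q^(n+1) - 1)(q^n - 1) / ((q - 1)(q^2 - 1)) subspaces of dimension n - 2, so
   C(|X|, n-1) <= n N.  Finally (|X| - n + 2)^(n-1) <= (n-1)! C(|X|, n-1) <= n! N.
   Only condition (i) of an (n,n-2)-set is needed. *)

interpretation V: vector_space "scl :: 'a::field \<Rightarrow> (nat \<Rightarrow> 'a) \<Rightarrow> (nat \<Rightarrow> 'a)"
  by unfold_locales (auto simp: scl_def fun_eq_iff algebra_simps)

lemma CARD_field_ge_2: "CARD('a::{finite,field}) \<ge> 2"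
proof -
  have "card {0::'a, 1} \<le> CARD('a)" by (rule card_mono) auto
  then show ?thesis by simp
qed

lemma card_vecs: "card (vecs n :: (nat \<Rightarrow> 'a::{finite,field}) set) = CARD('a) ^ (n + 1)"
proof -
  have "bij_betw (\<lambda>f. restrict f {..n}) (vecs n :: (nat \<Rightarrow> 'a) set) ({..n} \<rightarrow>\<^sub>E UNIV)"
    by (rule bij_betw_byWitness[where f' = "\<lambda>g i. if i \<le> n then g i else 0"])
      (auto simp: vecs_def fun_eq_iff PiE_def extensional_def)
  then have "card (vecs n :: (nat \<Rightarrow> 'a) set) = card ({..n} \<rightarrow>\<^sub>E (UNIV :: 'a set))"
    by (rule bij_betw_same_card)
  then show ?thesis by (simp add: card_PiE)
qed

lemma finite_vecs: "finite (vecs n :: (nat \<Rightarrow> 'a::{finite,field}) set)"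
  using card_vecs[of n, where 'a='a] CARD_field_ge_2[where 'a='a] by (intro card_ge_0_finite) simp

lemma subspace_vecs: "V.subspace (vecs n :: (nat \<Rightarrow> 'a::field) set)"
  by (auto simp: V.subspace_def vecs_def scl_def)

lemma finite_proj_subspaces: "finite {W :: (nat \<Rightarrow> 'a::{finite,field}) set. proj_subspace n s W}"
  by (rule finite_subset[of _ "Pow (vecs n)"]) (auto simp: proj_subspace_def finite_vecs)

lemma finite_PG_points: "finite (PG_points n :: (nat \<Rightarrow> 'a::{finite,field}) set set)"
  unfolding PG_points_def by (rule finite_proj_subspaces)

lemma card_span_independent:
  fixes B :: "(nat \<Rightarrow> 'a::{finite,field}) set"
  assumes fin: "finite B" and ind: "V.independent B"
  shows "card (V.span B) = CARD('a) ^ card B"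
proof -
  define g where "g c = (\<Sum>b\<in>B. scl (c b) b)" for c :: "(nat \<Rightarrow> 'a) \<Rightarrow> 'a"
  have "V.span B = range g" unfolding g_def by (rule V.span_finite[OF fin])
  also have "\<dots> = g ` (B \<rightarrow>\<^sub>E UNIV)"
  proof (intro equalityI subsetI)
    fix y assume "y \<in> range g"
    then obtain c where "y = g c" by auto
    moreover have "g c = g (restrict c B)" unfolding g_def by (intro sum.cong) simp_all
    ultimately show "y \<in> g ` (B \<rightarrow>\<^sub>E UNIV)" by auto
  qed auto
  finally have span_eq: "V.span B = g ` (B \<rightarrow>\<^sub>E UNIV)" .
  have "inj_on g (B \<rightarrow>\<^sub>E UNIV)"
  proof (rule inj_onI)
    fix c1 c2 assume c: "c1 \<in> B \<rightarrow>\<^sub>E UNIV" "c2 \<in> B \<rightarrow>\<^sub>E UNIV" and "g c1 = g c2"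
    then have "(\<Sum>b\<in>B. scl (c1 b - c2 b) b) = 0"
      unfolding g_def by (simp add: V.scale_left_diff_distrib sum_subtractf)
    then have "\<forall>b\<in>B. c1 b - c2 b = 0"
      using V.independentD[OF ind fin order_refl, of "\<lambda>b. c1 b - c2 b"] by blast
    then show "c1 = c2" by (intro PiE_ext[OF c]) simp
  qed
  then show ?thesis by (simp add: span_eq card_image card_PiE fin)
qed

lemma card_subspace:
  fixes W :: "(nat \<Rightarrow> 'a::{finite,field}) set"
  assumes "W \<subseteq> vecs n" "V.subspace W"
  shows "card W = CARD('a) ^ V.dim W"
proof -
  obtain B where B: "B \<subseteq> W" "V.independent B" "W \<subseteq> V.span B" "card B = V.dim W"
    by (rule V.basis_exists)
  have "V.span B = W" using B(1,3) V.span_minimal[OF B(1) assms(2)] by blast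
  moreover have "finite B" using finite_subset[OF order_trans[OF B(1) assms(1)] finite_vecs] .
  ultimately show ?thesis using card_span_independent[of B] B(2,4) by metis
qed

lemma dim_vecs: "V.dim (vecs n :: (nat \<Rightarrow> 'a::{finite,field}) set) = n + 1"
proof -
  have "CARD('a) ^ V.dim (vecs n :: (nat \<Rightarrow> 'a) set) = CARD('a) ^ (n + 1)"
    using card_subspace[OF order_refl subspace_vecs] card_vecs by metis
  moreover have "1 < CARD('a)" using CARD_field_ge_2[where 'a='a] by linarith
  ultimately show ?thesis using power_inject_exp by blast
qed

lemma extend_independent_in_vecs:
  fixes B :: "(nat \<Rightarrow> 'a::{finite,field}) set"
  assumes B: "B \<subseteq> vecs n" "V.independent B" and t: "card B \<le> t" "t \<le> n + 1"
  obtains B' where "B \<subseteq> B'" "B' \<subseteq> vecs n" "V.independent B'" "card B' = t"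
proof -
  obtain Bf where Bf: "B \<subseteq> Bf" "Bf \<subseteq> vecs n" "V.independent Bf" "vecs n \<subseteq> V.span Bf"
    using V.maximal_independent_subset_extend[OF B] by blast
  have "card Bf = n + 1" using V.basis_card_eq_dim[OF Bf(2,4,3)] dim_vecs by simp
  moreover have "finite Bf" using finite_subset[OF Bf(2) finite_vecs] .
  ultimately have "t - card B \<le> card (Bf - B)" using Bf(1) t by (simp add: card_Diff_subset finite_subset)
  then obtain C where C: "C \<subseteq> Bf - B" "card C = t - card B" "finite C"
    by (rule obtain_subset_with_card_n)
  show ?thesis
  proof
    show "B \<subseteq> B \<union> C" "B \<union> C \<subseteq> vecs n" using C(1) Bf(1,2) by blast+
    show "V.independent (B \<union> C)" using V.independent_mono[OF Bf(3)] C(1) Bf(1) by blast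
    have "card (B \<union> C) = card B + card C"
      using C \<open>finite Bf\<close> Bf(1) by (intro card_Un_disjoint) (auto simp: finite_subset)
    then show "card (B \<union> C) = t" using C(2) t by simp
  qed
qed

definition indep_lists :: "(nat \<Rightarrow> 'a::field) set \<Rightarrow> nat \<Rightarrow> (nat \<Rightarrow> 'a) list set" where
  "indep_lists S d = {xs. length xs = d \<and> set xs \<subseteq> S \<and> distinct xs \<and> V.independent (set xs)}"

lemma finite_indep_lists:
  fixes S :: "(nat \<Rightarrow> 'a::{finite,field}) set"
  assumes "S \<subseteq> vecs n"
  shows "finite (indep_lists S d)"
proof -
  have "finite {xs. set xs \<subseteq> S \<and> length xs = d}"
    using finite_subset[OF assms finite_vecs] by (rule finite_lists_length_eq)
  then show ?thesis by (rule finite_subset[rotated]) (auto simp: indep_lists_def)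
qed

lemma indep_lists_Suc:
  "indep_lists S (Suc d) = (\<Union>xs\<in>indep_lists S d. (\<lambda>x. x # xs) ` (S - V.span (set xs)))"
proof safe
  fix ys assume "ys \<in> indep_lists S (Suc d)"
  then obtain x xs where "ys = x # xs" "length xs = d" "x \<in> S" "set xs \<subseteq> S" "distinct xs"
    "x \<notin> set xs" "V.independent (insert x (set xs))"
    by (auto simp: indep_lists_def length_Suc_conv)
  moreover from this have "V.independent (set xs)" "x \<notin> V.span (set xs)"
    using V.independent_insert[of x "set xs"] V.span_base[of x "set xs"] by auto
  ultimately show "ys \<in> (\<Union>xs\<in>indep_lists S d. (\<lambda>x. x # xs) ` (S - V.span (set xs)))"
    by (auto simp: indep_lists_def)
next
  fix xs x assume "xs \<in> indep_lists S d" "x \<in> S" "x \<notin> V.span (set xs)"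
  moreover from this have "x \<notin> set xs" using V.span_base by blast
  ultimately show "x # xs \<in> indep_lists S (Suc d)"
    using V.independent_insert[of x "set xs"] by (simp add: indep_lists_def)
qed

lemma card_indep_lists:
  fixes S :: "(nat \<Rightarrow> 'a::{finite,field}) set"
  assumes S: "S \<subseteq> vecs n" "V.subspace S"
  shows "card (indep_lists S d) = (\<Prod>j<d. card S - CARD('a) ^ j)"
proof (induction d)
  case 0
  have "indep_lists S 0 = {[]}" using V.independent_empty by (auto simp: indep_lists_def)
  then show ?case by simp
next
  case (Suc d)
  have "finite S" using finite_subset[OF S(1) finite_vecs] .
  have extensions: "card ((\<lambda>x. x # xs) ` (S - V.span (set xs))) = card S - CARD('a) ^ d"
    if xs: "xs \<in> indep_lists S d" for xs
  proof -
    have "V.span (set xs) \<subseteq> S" using xs V.span_minimal[OF _ S(2)] by (auto simp: indep_lists_def)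
    moreover have "card (V.span (set xs)) = CARD('a) ^ d"
      using xs card_span_independent[of "set xs"] by (auto simp: indep_lists_def distinct_card)
    ultimately show ?thesis
      using \<open>finite S\<close> by (simp add: card_image inj_on_def card_Diff_subset finite_subset)
  qed
  have "card (indep_lists S (Suc d)) = (\<Sum>xs\<in>indep_lists S d. card ((\<lambda>x. x # xs) ` (S - V.span (set xs))))"
    unfolding indep_lists_Suc
    using finite_indep_lists[OF S(1)] \<open>finite S\<close> by (intro card_UN_disjoint) auto
  also have "\<dots> = card (indep_lists S d) * (card S - CARD('a) ^ d)" by (simp add: extensions)
  finally show ?case using Suc.IH by simp
qed

lemma span_indep_lists:
  fixes W :: "(nat \<Rightarrow> 'a::{finite,field}) set"
  assumes W: "W \<subseteq> vecs n" "V.subspace W" and xs: "xs \<in> indep_lists W (V.dim W)"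
  shows "V.span (set xs) = W"
proof -
  have "finite W" using finite_subset[OF W(1) finite_vecs] .
  moreover have "V.span (set xs) \<subseteq> W" using xs V.span_minimal[OF _ W(2)] by (auto simp: indep_lists_def)
  moreover have "card (V.span (set xs)) = card W"
    using xs card_span_independent[of "set xs"] card_subspace[OF W]
    by (auto simp: indep_lists_def distinct_card)
  ultimately show ?thesis by (rule card_subset_eq)
qed

lemma card_subspaces_mult_card_bases:
  "card {W :: (nat \<Rightarrow> 'a::{finite,field}) set. W \<subseteq> vecs n \<and> V.subspace W \<and> V.dim W = d}
     * (\<Prod>j<d. CARD('a) ^ d - CARD('a) ^ j) = (\<Prod>j<d. CARD('a) ^ (n + 1) - CARD('a) ^ j)"
proof -
  define WW where "WW = {W :: (nat \<Rightarrow> 'a) set. W \<subseteq> vecs n \<and> V.subspace W \<and> V.dim W = d}"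
  have "finite WW"
    by (rule finite_subset[of _ "Pow (vecs n)"]) (auto simp: WW_def finite_vecs)
  have partition: "indep_lists (vecs n) d = (\<Union>W\<in>WW. indep_lists W d)"
  proof (intro equalityI subsetI)
    fix xs :: "(nat \<Rightarrow> 'a) list" assume xs: "xs \<in> indep_lists (vecs n) d"
    then have "V.span (set xs) \<in> WW"
      using V.span_minimal[OF _ subspace_vecs] V.dim_span_eq_card_independent[of "set xs"]
      by (auto simp: WW_def indep_lists_def distinct_card)
    moreover have "xs \<in> indep_lists (V.span (set xs)) d"
      using xs V.span_superset by (auto simp: indep_lists_def)
    ultimately show "xs \<in> (\<Union>W\<in>WW. indep_lists W d)" by blast
  qed (auto simp: WW_def indep_lists_def)
  have "card (indep_lists (vecs n :: (nat \<Rightarrow> 'a) set) d) = (\<Sum>W\<in>WW. card (indep_lists W d))"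
    unfolding partition
  proof (rule card_UN_disjoint[OF \<open>finite WW\<close>])
    show "\<forall>W\<in>WW. finite (indep_lists W d)" using finite_indep_lists by (auto simp: WW_def)
    show "\<forall>W1\<in>WW. \<forall>W2\<in>WW. W1 \<noteq> W2 \<longrightarrow> indep_lists W1 d \<inter> indep_lists W2 d = {}"
    proof (intro ballI impI equals0I)
      fix W1 W2 xs assume "W1 \<in> WW" "W2 \<in> WW" "W1 \<noteq> W2" "xs \<in> indep_lists W1 d \<inter> indep_lists W2 d"
      then show False using span_indep_lists[of W1 n xs] span_indep_lists[of W2 n xs] by (auto simp: WW_def)
    qed
  qed
  also have "\<dots> = (\<Sum>W\<in>WW. \<Prod>j<d. CARD('a) ^ d - CARD('a) ^ j)"
  proof (rule sum.cong[OF refl])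
    fix W assume "W \<in> WW"
    then show "card (indep_lists W d) = (\<Prod>j<d. CARD('a) ^ d - CARD('a) ^ j)"
      using card_indep_lists[of W n d] card_subspace[of W n] by (simp add: WW_def)
  qed
  also have "\<dots> = card WW * (\<Prod>j<d. CARD('a) ^ d - CARD('a) ^ j)" by simp
  finally show ?thesis
    using card_indep_lists[OF order_refl subspace_vecs, of n d, where 'a='a] card_vecs[of n, where 'a='a]
    by (simp add: WW_def)
qed

lemma of_nat_prod_pow_diff:
  fixes q :: nat
  assumes "q \<ge> 1"
  shows "real (\<Prod>j<d. q ^ (d + c) - q ^ j) = (\<Prod>j<d. real q ^ j) * (\<Prod>i\<in>{c..<d + c}. real q ^ (i + 1) - 1)"
proof -
  have "real (\<Prod>j<d. q ^ (d + c) - q ^ j) = (\<Prod>j<d. real q ^ j * (real q ^ (d + c - j) - 1))"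
    unfolding of_nat_prod
  proof (rule prod.cong[OF refl])
    fix j assume "j \<in> {..<d}"
    then have "q ^ j \<le> q ^ (d + c)" "real q ^ (d + c) = real q ^ j * real q ^ (d + c - j)"
      using assms by (auto intro: power_increasing simp flip: power_add)
    then show "real (q ^ (d + c) - q ^ j) = real q ^ j * (real q ^ (d + c - j) - 1)"
      by (simp add: of_nat_diff algebra_simps)
  qed
  also have "\<dots> = (\<Prod>j<d. real q ^ j) * (\<Prod>j<d. real q ^ (d + c - j) - 1)" by (rule prod.distrib)
  also have "(\<Prod>j<d. real q ^ (d + c - j) - 1) = (\<Prod>i\<in>{c..<d + c}. real q ^ (i + 1) - 1)"
    by (rule prod.reindex_bij_witness[of _ "\<lambda>i. d + c - Suc i" "\<lambda>j. d + c - Suc j"])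
      (auto simp: Suc_diff_Suc simp flip: power_Suc)
  finally show ?thesis .
qed

lemma prod_pow_minus_one_codim2:
  fixes x :: "'a::comm_ring_1"
  shows "(\<Prod>i\<in>{2..<d + 2}. x ^ (i + 1) - 1) * ((x - 1) * (x ^ 2 - 1))
    = (\<Prod>i\<in>{0..<d}. x ^ (i + 1) - 1) * ((x ^ (d + 1) - 1) * (x ^ (d + 2) - 1))"
proof -
  have "(\<Prod>i\<in>{0..<2}. x ^ (i + 1) - 1) = (x - 1) * (x ^ 2 - 1)"
    by (simp add: numeral_2_eq_2)
  moreover have "(\<Prod>i\<in>{d..<d + 2}. x ^ (i + 1) - 1) = (x ^ (d + 1) - 1) * (x ^ (d + 2) - 1)"
    by (simp add: numeral_2_eq_2)
  ultimately show ?thesis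
    using prod.atLeastLessThan_concat[of 0 2 "d + 2" "\<lambda>i. x ^ (i + 1) - 1"]
      prod.atLeastLessThan_concat[of 0 d "d + 2" "\<lambda>i. x ^ (i + 1) - 1"]
    by (simp add: mult.commute)
qed

lemma card_proj_subspaces_codim2:
  assumes "n \<ge> 2"
  shows "real (card {W :: (nat \<Rightarrow> 'a::{finite,field}) set. proj_subspace n (n - 2) W}) =
    (real CARD('a) ^ (n + 1) - 1) * (real CARD('a) ^ n - 1) / ((real CARD('a) - 1) * (real CARD('a) ^ 2 - 1))"
proof -
  define q where "q = CARD('a)"
  define d where "d = n - 1"
  define N where "N = card {W :: (nat \<Rightarrow> 'a) set. proj_subspace n (n - 2) W}"
  define Q where "Q = (\<Prod>j<d. real q ^ j)"
  define A where "A = (\<Prod>i\<in>{0..<d}. real q ^ (i + 1) - 1)"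
  define B where "B = (\<Prod>i\<in>{2..<d + 2}. real q ^ (i + 1) - 1)"
  have q: "q \<ge> 2" unfolding q_def by (rule CARD_field_ge_2)
  have n: "n + 1 = d + 2" "n = d + 1" "n - 2 + 1 = d" using assms by (auto simp: d_def)
  have "N * (\<Prod>j<d. q ^ (d + 0) - q ^ j) = (\<Prod>j<d. q ^ (d + 2) - q ^ j)"
    using card_subspaces_mult_card_bases[of n d, where 'a='a]
    by (simp only: N_def q_def proj_subspace_def n(3) add_0_right flip: n(1))
  then have "real N * real (\<Prod>j<d. q ^ (d + 0) - q ^ j) = real (\<Prod>j<d. q ^ (d + 2) - q ^ j)"
    by (simp only: flip: of_nat_mult)
  then have "real N * (Q * A) = Q * B"
    using q by (simp only: of_nat_prod_pow_diff[of q] Q_def A_def B_def) (simp_all only: add_0_right)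
  moreover have "Q > 0" unfolding Q_def using q by (intro prod_pos) auto
  ultimately have "real N * A = B" by simp
  then have "real N * A * ((real q - 1) * (real q ^ 2 - 1)) = A * ((real q ^ (d + 1) - 1) * (real q ^ (d + 2) - 1))"
    using prod_pow_minus_one_codim2[of "real q" d] by (simp only: A_def B_def)
  moreover have "A > 0" unfolding A_def using q by (intro prod_pos) (simp add: one_less_power del: power_Suc)
  ultimately have "real N * ((real q - 1) * (real q ^ 2 - 1)) = (real q ^ (d + 2) - 1) * (real q ^ (d + 1) - 1)"
    by (simp add: mult.commute mult.left_commute)
  moreover have "(real q - 1) * (real q ^ 2 - 1) \<noteq> 0" using q by (simp add: power2_eq_1_iff)
  ultimately have "real N = (real q ^ (d + 2) - 1) * (real q ^ (d + 1) - 1) / ((real q - 1) * (real q ^ 2 - 1))"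
    by (metis nonzero_eq_divide_eq)
  then show ?thesis unfolding N_def q_def by (simp only: n(1,2)[symmetric])
qed

lemma points_in_proj_subspace:
  fixes T :: "(nat \<Rightarrow> 'a::{finite,field}) set set"
  assumes T: "T \<subseteq> PG_points n" "finite T" "card T \<le> s + 1" and s: "s \<le> n"
  obtains W where "proj_subspace n s W" "\<And>P. P \<in> T \<Longrightarrow> P \<subseteq> W"
proof -
  have points: "P \<subseteq> vecs n" "V.dim P = 1" if "P \<in> T" for P
    using that T(1) by (auto simp: PG_points_def proj_subspace_def)
  have "\<exists>v. P \<subseteq> V.span {v}" if "P \<in> T" for P
  proof -
    obtain B where "V.independent B" "P \<subseteq> V.span B" "card B = V.dim P" by (rule V.basis_exists)
    then show ?thesis using points[OF that] by (auto simp: card_1_singleton_iff)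
  qed
  then obtain v where v: "\<And>P. P \<in> T \<Longrightarrow> P \<subseteq> V.span {v P}" by metis
  have "\<Union>T \<subseteq> V.span (v ` T)" using v V.span_mono[of "{v _}" "v ` T"] by blast
  then have "V.dim (\<Union>T) \<le> card T"
    using V.dim_le_card[of "\<Union>T" "v ` T"] card_image_le[of T v] T(2) by simp
  obtain B0 where B0: "B0 \<subseteq> \<Union>T" "V.independent B0" "\<Union>T \<subseteq> V.span B0"
    using V.maximal_independent_subset[of "\<Union>T"] by blast
  have "card B0 \<le> s + 1" using V.basis_card_eq_dim[OF B0(1,3,2)] \<open>V.dim (\<Union>T) \<le> card T\<close> T(3) by simp
  moreover have "B0 \<subseteq> vecs n" using B0(1) points by blast
  ultimately obtain B where B: "B0 \<subseteq> B" "B \<subseteq> vecs n" "V.independent B" "card B = s + 1"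
    using extend_independent_in_vecs B0(2) s by (metis add_le_mono1)
  show ?thesis
  proof
    show "proj_subspace n s (V.span B)"
      using V.span_minimal[OF B(2) subspace_vecs] V.dim_span_eq_card_independent[OF B(3)] B(4)
      by (simp add: proj_subspace_def)
    show "P \<subseteq> V.span B" if "P \<in> T" for P
      using that B0(3) V.span_mono[OF B(1)] by blast
  qed
qed

lemma choose_le_card_mult_choose_of_cover:
  fixes X :: "'p set" and I :: "'i set" and B :: "'i \<Rightarrow> 'p set"
  assumes "finite X" "finite I"
    and few: "\<And>i. i \<in> I \<Longrightarrow> card (B i \<inter> X) \<le> r"
    and cover: "\<And>T. T \<subseteq> X \<Longrightarrow> card T = k \<Longrightarrow> \<exists>i\<in>I. T \<subseteq> B i"
  shows "card X choose k \<le> card I * (r choose k)"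
proof -
  have "card X choose k = card {T. T \<subseteq> X \<and> card T = k}" using n_subsets[OF \<open>finite X\<close>] by simp
  also have "\<dots> \<le> card (\<Union>i\<in>I. {T. T \<subseteq> B i \<inter> X \<and> card T = k})"
    using cover \<open>finite X\<close> \<open>finite I\<close> by (intro card_mono) (auto intro: finite_subset[of _ "Pow X"])
  also have "\<dots> \<le> (\<Sum>i\<in>I. card {T. T \<subseteq> B i \<inter> X \<and> card T = k})"
    using \<open>finite I\<close> by (rule card_UN_le)
  also have "\<dots> = (\<Sum>i\<in>I. card (B i \<inter> X) choose k)"
    using \<open>finite X\<close> by (intro sum.cong refl n_subsets) simp
  also have "\<dots> \<le> (\<Sum>i\<in>I. r choose k)"
    using few by (intro sum_mono binomial_right_mono)
  finally show ?thesis by simp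
qed

lemma choose_le_card_proj_subspaces_mult_choose:
  fixes X :: "(nat \<Rightarrow> 'a::{finite,field}) set set"
  assumes X: "X \<subseteq> PG_points n" and s: "s \<le> n"
    and few: "\<And>W. proj_subspace n s W \<Longrightarrow> pts_in X W \<le> r"
  shows "card X choose (s + 1) \<le> card {W :: (nat \<Rightarrow> 'a) set. proj_subspace n s W} * (r choose (s + 1))"
proof -
  have "finite X" using finite_subset[OF X finite_PG_points] .
  show ?thesis
  proof (rule choose_le_card_mult_choose_of_cover[where B = "\<lambda>W. {P. P \<subseteq> W}"])
    show "finite X" by fact
    show "finite {W :: (nat \<Rightarrow> 'a) set. proj_subspace n s W}" by (rule finite_proj_subspaces)
    show "card ({P. P \<subseteq> W} \<inter> X) \<le> r" if "W \<in> {W. proj_subspace n s W}" for W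
      using few that by (simp add: pts_in_def Int_def conj_commute)
    show "\<exists>W\<in>{W. proj_subspace n s W}. T \<subseteq> {P. P \<subseteq> W}" if "T \<subseteq> X" "card T = s + 1" for T
    proof -
      have "T \<subseteq> PG_points n" "finite T" "card T \<le> s + 1"
        using that X \<open>finite X\<close> by (auto intro: finite_subset)
      then obtain W where "proj_subspace n s W" "\<And>P. P \<in> T \<Longrightarrow> P \<subseteq> W"
        by (rule points_in_proj_subspace) (use s in auto)
      then show ?thesis by auto
    qed
  qed
qed

lemma power_le_fact_mult_choose:
  assumes "k \<le> m"
  shows "(real m - real k + 1) ^ k \<le> fact k * real (m choose k)"
proof -
  have "fact k * real (m choose k) = (\<Prod>i = 0..<k. real (k - i)) * (\<Prod>i = 0..<k. real (m - i) / real (k - i))"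
    using assms by (simp add: binomial_altdef_of_nat fact_prod_rev[of k] of_nat_prod)
  also have "\<dots> = (\<Prod>i = 0..<k. real (m - i))"
    by (simp flip: prod.distrib)
  finally have falling: "fact k * real (m choose k) = (\<Prod>i = 0..<k. real (m - i))" .
  have "(real m - real k + 1) ^ k = (\<Prod>i = 0..<k. real m - real k + 1)" by simp
  also have "\<dots> \<le> (\<Prod>i = 0..<k. real (m - i))"
    using assms by (intro prod_mono) (auto simp: of_nat_diff)
  finally show ?thesis using falling by simp
qed

lemma le_root_of_fact_mult_choose_le:
  assumes k: "0 < k" and G: "fact k * real (m choose k) \<le> G"
  shows "real m \<le> G powr (1 / real k) + real k - 1"
proof (cases "k \<le> m")
  case False
  then have "real m \<le> real k - 1" by linarith
  moreover have "0 \<le> G powr (1 / real k)" by simp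
  ultimately show ?thesis by linarith
next
  case True
  define a where "a = real m - real k + 1"
  have "a \<ge> 1" using True by (simp add: a_def)
  have "0 \<le> G" using order_trans[OF _ G] by simp
  have "a ^ k \<le> G" using power_le_fact_mult_choose[OF True] G by (simp add: a_def)
  have "a = root k (a ^ k)" using k \<open>a \<ge> 1\<close> by (simp add: real_root_power_cancel)
  also have "\<dots> \<le> root k G" using k \<open>a ^ k \<le> G\<close> by (rule real_root_le_mono)
  also have "\<dots> = G powr (1 / real k)"
    using k \<open>0 \<le> G\<close> by (simp add: root_powr_inverse)
  finally show ?thesis by (simp add: a_def)
qed

theorem mainTheorem1:
  fixes X :: "(nat \<Rightarrow> 'a::{finite,field}) set set" and n :: nat
  assumes "n \<ge> 3"
    and "rs_set n n (n - 2) X"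
  shows "real (card X) \<le>
    (real (fact n) * (real (card (UNIV :: 'a set)) ^ (n + 1) - 1) * (real (card (UNIV :: 'a set)) ^ n - 1)
      / ((real (card (UNIV :: 'a set)) - 1) * (real (card (UNIV :: 'a set)) ^ 2 - 1))) powr (1 / (real n - 1))
    + real n - 2"
proof -
  let ?G = "real (fact n) * (real CARD('a) ^ (n + 1) - 1) * (real CARD('a) ^ n - 1)
    / ((real CARD('a) - 1) * (real CARD('a) ^ 2 - 1))"
  define WW where "WW = {W :: (nat \<Rightarrow> 'a) set. proj_subspace n (n - 2) W}"
  have "card X choose (n - 2 + 1) \<le> card WW * (n choose (n - 2 + 1))"
    unfolding WW_def using assms by (intro choose_le_card_proj_subspaces_mult_choose) (auto simp: rs_set_def)
  moreover have "n - 2 + 1 = n - 1" "n choose (n - 1) = n" using assms(1) binomial_symmetric[of 1 n] by auto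
  ultimately have "real (card X choose (n - 1)) \<le> real n * real (card WW)"
    by (simp add: mult.commute flip: of_nat_mult)
  then have "fact (n - 1) * real (card X choose (n - 1)) \<le> fact (n - 1) * (real n * real (card WW))"
    by (rule mult_left_mono) simp
  also have "\<dots> = fact n * real (card WW)" using assms(1) fact_reduce[of n, where 'a=real] by simp
  also have "\<dots> = ?G"
    using card_proj_subspaces_codim2[of n, where 'a='a] assms(1) by (simp add: WW_def mult.assoc)
  finally have "real (card X) \<le> ?G powr (1 / real (n - 1)) + real (n - 1) - 1"
    using assms(1) by (intro le_root_of_fact_mult_choose_le) auto
  then show ?thesis using assms(1) by (simp add: of_nat_diff)
qed

end
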